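(* For every integer $t$, \[ \sum_{n=1}^\infty\binom{2n}{n}\frac{O_n}{8^n}L_{n+t}=\sqrt2\,L_{t+1}\ln\alpha+\frac{\sqrt{10}\,\ln2}{2}F_{t+1},\qquad \sum_{n=1}^\infty\binom{2n}{n}\frac{O_n}{8^n}F_{n+t}=\sqrt2\,F_{t+1}\ln\alpha+\frac{\ln2}{\sqrt{10}}L_{t+1}, \] and, more generally, for every gibonacci sequence $(G_j)=(G_j(a,b))$, \[ \sum_{n=1}^\infty\binom{2n}{n}\frac{O_n}{8^n}G_{n+t}=\sqrt2\,G_{t+1}\ln\alpha+\frac{\ln2}{\sqrt{10}}\bigl(G_{t+2}+G_t\bigr). \]
   Context: $O_n=\sum_{j=1}^n\frac1{2j-1}$. $F_n$ and $L_n$ are the Fibonacci and Lucas numbers ($F_0=0,F_1=1$, $L_0=2,L_1=1$, $u_n=u_{n-1}+u_{n-2}$), extended to all integers by the recurrence. $\alpha=(1+\sqrt5)/2$, $\beta=-1/\alpha$, so $F_n=(\alpha^n-\beta^n)/(\alpha-\beta)$, $L_n=\alpha^n+\beta^n$. For numbers $a,b$ not both zero, the gibonacci sequence $G_j=G_j(a,b)$ is defined by $G_0=a$, $G_1=b$, $G_j=G_{j-1}+G_{j-2}$, extended to negative indices by $G_{-j}=G_{-(j-2)}-G_{-(j-1)}$; equivalently $G_j=\frac{(b-a\beta)\alpha^j+(a\alpha-b)\beta^j}{\alpha-\beta}$. *)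

theory Defs
  imports Complex_Main
begin

definition odd_harm :: "nat \<Rightarrow> real" where
  "odd_harm n = (\<Sum>j=1..n. 1 / (2 * real j - 1))"

definition gr_alpha :: real where "gr_alpha = (1 + sqrt 5) / 2"

fun gib_pos :: "real \<Rightarrow> real \<Rightarrow> nat \<Rightarrow> real" where
  "gib_pos a b 0 = a"
| "gib_pos a b (Suc 0) = b"
| "gib_pos a b (Suc (Suc n)) = gib_pos a b (Suc n) + gib_pos a b n"

fun gib_neg :: "real \<Rightarrow> real \<Rightarrow> nat \<Rightarrow> real" where
  "gib_neg a b 0 = a"
| "gib_neg a b (Suc 0) = b - a"
| "gib_neg a b (Suc (Suc n)) = gib_neg a b n - gib_neg a b (Suc n)"

definition gib :: "real \<Rightarrow> real \<Rightarrow> int \<Rightarrow> real" where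
  "gib a b k = (if 0 \<le> k then gib_pos a b (nat k) else gib_neg a b (nat (- k)))"

definition Fibz :: "int \<Rightarrow> real" where "Fibz = gib 0 1"
definition Lucz :: "int \<Rightarrow> real" where "Lucz = gib 2 1"

end

theory Submission
  imports Defs "HOL-Analysis.Generalised_Binomial_Theorem"
begin

(* By Binet's formula G_j = A alpha^j + B beta^j, the series splits into the generating
   function f(x) = sum_n C(2n,n) O_n x^n evaluated at x = alpha/8 and x = beta/8.
   f is the Cauchy product of sum_n C(2n,n) x^n = (1 - 4x)^(-1/2) and
   sum_n 4^n x^n / (2n) = -ln(1 - 4x) / 2, hence f(x) = -ln(1 - 4x) / (2 sqrt(1 - 4x)); the
   coefficient identity holds because both sides satisfy the same first-order recurrence.
   For a root r of r^2 = r + 1 one has 1 - r/2 = 1/(2 r^2), so f(r/8) is explicit in |r| and ln |r|.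
   Finally the ln 2 terms combine through G_(t+2) + G_t = sqrt 5 (A alpha^(t+1) - B beta^(t+1)). *)

definition gr_beta :: real where "gr_beta = (1 - sqrt 5) / 2"

lemma gr_alpha_sq: "gr_alpha * gr_alpha = gr_alpha + 1"
  and gr_beta_sq: "gr_beta * gr_beta = gr_beta + 1"
  and gr_alpha_times_beta: "gr_alpha * gr_beta = -1"
  and gr_alpha_minus_beta: "gr_alpha - gr_beta = sqrt 5"
  unfolding gr_alpha_def gr_beta_def by (simp_all add: field_simps)

lemma gr_alpha_gt_1: "1 < gr_alpha"
  unfolding gr_alpha_def by (simp add: real_less_rsqrt)

lemma gr_alpha_less_2: "gr_alpha < 2"
  unfolding gr_alpha_def using real_less_lsqrt [of 3 5] by simp

lemma gr_beta_eq: "gr_beta = - inverse gr_alpha"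
  using gr_alpha_times_beta gr_alpha_gt_1 by (simp add: field_simps)

lemma abs_gr_beta_less_1: "\<bar>gr_beta\<bar> < 1"
  using gr_alpha_gt_1 by (simp add: gr_beta_eq inverse_less_1_iff)

lemma golden_power_Suc_Suc:
  fixes r :: real
  assumes "r * r = r + 1"
  shows "r ^ Suc (Suc n) = r ^ Suc n + r ^ n"
proof -
  have "r ^ Suc (Suc n) = (r * r) * r ^ n" by simp
  then show ?thesis using assms by (simp add: algebra_simps)
qed

lemma golden_minus_power_Suc_Suc:
  fixes r :: real
  assumes "r * r = r + 1"
  shows "(- r) ^ Suc (Suc n) = (- r) ^ n - (- r) ^ Suc n"
proof -
  have "(- r) ^ Suc (Suc n) = (r * r) * (- r) ^ n" by simp
  then show ?thesis using assms by (simp add: algebra_simps)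
qed

definition golden_binet :: "real \<Rightarrow> real \<Rightarrow> int \<Rightarrow> real" where
  "golden_binet A B k = A * gr_alpha powi k + B * gr_beta powi k"

lemma gib_pos_binet:
  "gib_pos a b n = ((b - a * gr_beta) * gr_alpha ^ n + (a * gr_alpha - b) * gr_beta ^ n) / sqrt 5"
proof (induction a b n rule: gib_pos.induct)
  case (3 a b n)
  then show ?case
    by (simp only: gib_pos.simps golden_power_Suc_Suc[OF gr_alpha_sq] golden_power_Suc_Suc[OF gr_beta_sq])
      (simp add: field_simps)
qed (simp_all add: gr_alpha_def gr_beta_def field_simps)

lemma gib_neg_binet:
  "gib_neg a b n = ((b - a * gr_beta) * (- gr_beta) ^ n + (a * gr_alpha - b) * (- gr_alpha) ^ n) / sqrt 5"
proof (induction a b n rule: gib_neg.induct)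
  case (3 a b n)
  then show ?case
    by (simp only: gib_neg.simps golden_minus_power_Suc_Suc[OF gr_alpha_sq]
        golden_minus_power_Suc_Suc[OF gr_beta_sq])
      (simp add: field_simps)
qed (simp_all add: gr_alpha_def gr_beta_def field_simps)

lemma gib_eq_golden_binet:
  "gib a b = golden_binet ((b - a * gr_beta) / sqrt 5) ((a * gr_alpha - b) / sqrt 5)"
proof
  fix k :: int
  have inverse_alpha: "inverse gr_alpha = - gr_beta" and inverse_beta: "inverse gr_beta = - gr_alpha"
    using gr_alpha_times_beta by (auto intro: inverse_unique simp: mult.commute)
  show "gib a b k = golden_binet ((b - a * gr_beta) / sqrt 5) ((a * gr_alpha - b) / sqrt 5) k"
  proof (cases "0 \<le> k")
    case True
    then obtain n where "k = int n" by (metis nonneg_eq_int)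
    then show ?thesis
      by (simp add: gib_def golden_binet_def gib_pos_binet add_divide_distrib)
  next
    case False
    then obtain n where "k = - int n" and "n > 0" by (metis neg_int_cases not_le)
    then show ?thesis
      by (simp add: gib_def golden_binet_def gib_neg_binet add_divide_distrib power_int_minus
          flip: power_inverse inverse_alpha inverse_beta)
  qed
qed

lemma golden_binet_add_two:
  "golden_binet A B (k + 2) + golden_binet A B k = sqrt 5 * golden_binet A (- B) (k + 1)"
proof -
  have "gr_alpha \<noteq> 0" "gr_beta \<noteq> 0"
    using gr_alpha_times_beta by auto
  then have "gr_alpha powi (k + 2) = gr_alpha powi k * (gr_alpha * gr_alpha)"
    "gr_alpha powi (k + 1) = gr_alpha powi k * gr_alpha"
    "gr_beta powi (k + 2) = gr_beta powi k * (gr_beta * gr_beta)"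
    "gr_beta powi (k + 1) = gr_beta powi k * gr_beta"
    by (simp_all add: power_int_add power2_eq_square)
  then show ?thesis
    unfolding golden_binet_def
    using gr_alpha_sq gr_beta_sq gr_alpha_times_beta gr_alpha_minus_beta by algebra
qed

lemma Lucz_eq_golden_binet: "Lucz = golden_binet 1 1"
proof -
  have "(1 - 2 * gr_beta) / sqrt 5 = 1" "(2 * gr_alpha - 1) / sqrt 5 = 1"
    by (simp_all add: gr_alpha_def gr_beta_def field_simps)
  then show ?thesis
    unfolding Lucz_def gib_eq_golden_binet by (simp only:)
qed

lemma Fibz_eq_golden_binet: "Fibz = golden_binet (1 / sqrt 5) (- 1 / sqrt 5)"
  by (simp add: Fibz_def gib_eq_golden_binet)

lemma Lucz_add_two: "Lucz (k + 2) + Lucz k = 5 * Fibz (k + 1)"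
  unfolding Lucz_eq_golden_binet Fibz_eq_golden_binet golden_binet_add_two
  by (simp add: golden_binet_def field_simps)

lemma Fibz_add_two: "Fibz (k + 2) + Fibz k = Lucz (k + 1)"
  unfolding Lucz_eq_golden_binet Fibz_eq_golden_binet golden_binet_add_two
  by (simp add: golden_binet_def field_simps)

lemma central_binomial_Suc:
  "real (Suc n) * real (2 * Suc n choose Suc n) = (4 * real n + 2) * real (2 * n choose n)"
proof -
  have "Suc n * (2 * Suc n choose Suc n) = 2 * (Suc n * (Suc (2 * n) choose n))"
    using Suc_times_binomial[of n "Suc (2 * n)"] by simp
  also have "Suc n * (Suc (2 * n) choose n) = Suc (2 * n) * (2 * n choose n)"
    using Suc_times_binomial[of n "2 * n"] binomial_symmetric[of n "Suc (2 * n)"] by simp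
  finally have "Suc n * (2 * Suc n choose Suc n) = (4 * n + 2) * (2 * n choose n)"
    by simp
  then show ?thesis
    by (metis of_nat_mult of_nat_add of_nat_numeral)
qed

lemma gbinomial_minus_half:
  "((- 1 / 2 :: real) gchoose n) * (- 4) ^ n = real (2 * n choose n)"
proof (induction n)
  case (Suc n)
  have "real (Suc n) * ((- 1 / 2 :: real) gchoose Suc n) = (- 1 / 2 - real n) * ((- 1 / 2) gchoose n)"
    by (simp only: gbinomial_absorption gbinomial_absorb_comp)
  then have "real (Suc n) * (((- 1 / 2 :: real) gchoose Suc n) * (- 4) ^ Suc n)
      = ((- 1 / 2 - real n) * ((- 1 / 2) gchoose n)) * (- 4) ^ Suc n"
    by (simp only: mult.assoc [symmetric])
  also have "\<dots> = (4 * real n + 2) * (((- 1 / 2) gchoose n) * (- 4) ^ n)"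
    by (simp add: algebra_simps)
  also have "\<dots> = real (Suc n) * real (2 * Suc n choose Suc n)"
    by (simp only: Suc central_binomial_Suc)
  finally show ?case
    by (simp only: mult_cancel_left of_nat_eq_0_iff nat.distinct simp_thms)
qed simp

lemma central_binomial_sums:
  fixes x :: real
  assumes "\<bar>x\<bar> < 1 / 4"
  shows "(\<lambda>n. real (2 * n choose n) * x ^ n) sums (1 / sqrt (1 - 4 * x))"
proof -
  have "\<bar>- 4 * x\<bar> < 1" using assms by simp
  from gen_binomial_real[OF this, of "- 1 / 2"]
  have "(\<lambda>n. ((- 1 / 2) gchoose n) * (- 4) ^ n * x ^ n) sums (1 - 4 * x) powr (- 1 / 2)"
    unfolding power_mult_distrib mult.assoc by simp
  moreover have "(1 - 4 * x) powr (- 1 / 2) = 1 / sqrt (1 - 4 * x)"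
    using assms by (simp add: powr_minus_divide powr_half_sqrt)
  ultimately show ?thesis
    by (simp only: gbinomial_minus_half)
qed

(* At n = 0 the coefficient is 1 / 0, which is 0 in Isabelle, as the logarithm has no constant term. *)
lemma log_series_4x:
  fixes x :: real
  assumes "\<bar>x\<bar> < 1 / 4"
  shows "(\<lambda>n. 4 ^ n / (2 * real n) * x ^ n) sums (- ln (1 - 4 * x) / 2)"
proof -
  have "\<bar>- 4 * x\<bar> < 1" using assms by simp
  from sums_mult[OF ln_series'[OF this], of "- 1 / 2"]
  show ?thesis
    by (simp add: power_mult_distrib)
qed

definition log_central_convolution :: "nat \<Rightarrow> real" where
  "log_central_convolution n = (\<Sum>i\<le>n. 4 ^ i / (2 * real i) * real (2 * (n - i) choose (n - i)))"

lemma log_coeff_weighted_sum_Suc: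
  fixes f :: "nat \<Rightarrow> real"
  shows "(\<Sum>i\<le>Suc n. real i * (4 ^ i / (2 * real i)) * f (Suc n - i))
    = 4 * (\<Sum>i\<le>n. real i * (4 ^ i / (2 * real i)) * f (n - i)) + 2 * f n"
proof -
  have weight_Suc: "real (Suc i) * (4 ^ Suc i / (2 * real (Suc i)))
      = 4 * (real i * (4 ^ i / (2 * real i))) + (if i = 0 then 2 else 0)" for i :: nat
    by (cases "i = 0") (simp_all add: field_simps)
  have "(\<Sum>i\<le>Suc n. real i * (4 ^ i / (2 * real i)) * f (Suc n - i))
      = (\<Sum>i\<le>n. real (Suc i) * (4 ^ Suc i / (2 * real (Suc i))) * f (n - i))"
    by (subst sum.atMost_Suc_shift) simp
  also have "\<dots> = (\<Sum>i\<le>n. 4 * (real i * (4 ^ i / (2 * real i))) * f (n - i)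
      + (if i = 0 then 2 * f (n - i) else 0))"
    by (intro sum.cong refl) (simp only: weight_Suc distrib_right, simp)
  finally show ?thesis
    by (simp add: sum.distrib sum_distrib_left mult.assoc)
qed

lemma log_central_convolution_Suc:
  "real (Suc n) * log_central_convolution (Suc n)
     = (4 * real n + 2) * log_central_convolution n + 2 * real (2 * n choose n)"
proof -
  define c where "c k = real (2 * k choose k)" for k
  define l :: "nat \<Rightarrow> real" where "l i = 4 ^ i / (2 * real i)" for i
  have conv: "log_central_convolution m = (\<Sum>i\<le>m. l i * c (m - i))" for m
    by (simp add: log_central_convolution_def l_def c_def)
  have c_Suc: "real (Suc k) * c (Suc k) = (4 * real k + 2) * c k" for k
    unfolding c_def by (rule central_binomial_Suc)
  have "real (Suc n) * log_central_convolution (Suc n)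
      = (\<Sum>i\<le>Suc n. real i * l i * c (Suc n - i))
        + (\<Sum>i\<le>Suc n. l i * (real (Suc n - i) * c (Suc n - i)))"
    unfolding conv sum_distrib_left sum.distrib [symmetric]
    by (intro sum.cong refl) (auto simp: algebra_simps)
  also have "(\<Sum>i\<le>Suc n. real i * l i * c (Suc n - i))
      = 4 * (\<Sum>i\<le>n. real i * l i * c (n - i)) + 2 * c n"
    unfolding l_def by (rule log_coeff_weighted_sum_Suc)
  also have "(\<Sum>i\<le>Suc n. l i * (real (Suc n - i) * c (Suc n - i)))
      = (\<Sum>i\<le>n. l i * (real (Suc (n - i)) * c (Suc (n - i))))"
    by (auto simp: Suc_diff_le intro!: sum.cong)
  also have "\<dots> = (\<Sum>i\<le>n. l i * ((4 * (real n - real i) + 2) * c (n - i)))"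
  proof (intro sum.cong refl)
    fix i assume "i \<in> {..n}"
    then show "l i * (real (Suc (n - i)) * c (Suc (n - i))) = l i * ((4 * (real n - real i) + 2) * c (n - i))"
      by (simp only: c_Suc) simp
  qed
  also have "4 * (\<Sum>i\<le>n. real i * l i * c (n - i)) + 2 * c n
      + (\<Sum>i\<le>n. l i * ((4 * (real n - real i) + 2) * c (n - i)))
      = (4 * real n + 2) * log_central_convolution n + 2 * c n"
    unfolding conv sum_distrib_left
    by (simp add: sum.distrib [symmetric] algebra_simps)
  finally show ?thesis
    by (simp add: c_def)
qed

lemma odd_harm_Suc: "odd_harm (Suc n) = odd_harm n + 1 / (2 * real n + 1)"
  unfolding odd_harm_def by simp

lemma log_central_convolution_eq:
  "log_central_convolution n = real (2 * n choose n) * odd_harm n"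
proof (induction n)
  case 0
  then show ?case by (simp add: log_central_convolution_def odd_harm_def)
next
  case (Suc n)
  have "real (Suc n) * log_central_convolution (Suc n)
      = real (Suc n) * (real (2 * Suc n choose Suc n) * odd_harm (Suc n))"
    unfolding log_central_convolution_Suc Suc mult.assoc [symmetric] central_binomial_Suc
      odd_harm_Suc
    by (simp add: field_simps)
  then show ?case
    by (simp only: mult_cancel_left of_nat_eq_0_iff nat.distinct simp_thms)
qed

definition odd_harm_gf :: "real \<Rightarrow> real" where
  "odd_harm_gf x = - ln (1 - 4 * x) / (2 * sqrt (1 - 4 * x))"

lemma odd_harm_gf_sums:
  fixes x :: real
  assumes x: "\<bar>x\<bar> < 1 / 4"
  shows "(\<lambda>n. real (2 * n choose n) * odd_harm n * x ^ n) sums odd_harm_gf x"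
proof -
  define l where "l n = 4 ^ n / (2 * real n) * x ^ n" for n
  define c where "c n = real (2 * n choose n) * x ^ n" for n
  have abs_x: "\<bar>\<bar>x\<bar>\<bar> < 1 / 4" using x by simp
  have "summable (\<lambda>n. norm (l n))"
    using sums_summable[OF log_series_4x[OF abs_x]] by (simp add: l_def abs_mult power_abs)
  moreover have "summable (\<lambda>n. norm (c n))"
    using sums_summable[OF central_binomial_sums[OF abs_x]] by (simp add: c_def abs_mult power_abs)
  ultimately have "(\<lambda>n. \<Sum>i\<le>n. l i * c (n - i)) sums ((\<Sum>n. l n) * (\<Sum>n. c n))"
    by (rule Cauchy_product_sums)
  moreover have "(\<Sum>i\<le>n. l i * c (n - i)) = real (2 * n choose n) * odd_harm n * x ^ n" for n
  proof -
    have "(\<Sum>i\<le>n. l i * c (n - i)) = log_central_convolution n * x ^ n"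
      unfolding log_central_convolution_def sum_distrib_right l_def c_def
      by (intro sum.cong refl) (simp add: power_add [symmetric])
    then show ?thesis by (simp add: log_central_convolution_eq)
  qed
  moreover have "(\<Sum>n. l n) * (\<Sum>n. c n) = odd_harm_gf x"
    unfolding odd_harm_gf_def l_def c_def sums_unique [OF log_series_4x[OF x], symmetric]
      sums_unique [OF central_binomial_sums[OF x], symmetric]
    by simp
  ultimately show ?thesis by simp
qed

lemma odd_harm_gf_golden_root:
  fixes r :: real
  assumes r: "r * r = r + 1"
  shows "odd_harm_gf (r / 8) = sqrt 2 * \<bar>r\<bar> * (ln \<bar>r\<bar> + ln 2 / 2)"
proof -
  define q where "q = \<bar>r\<bar>"
  have "q > 0" using r by (auto simp: q_def)
  have "2 * (r * r) * (1 - 4 * (r / 8)) = 1"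
    using r by algebra
  then have eq: "1 - 4 * (r / 8) = 1 / (2 * q ^ 2)"
    using \<open>q > 0\<close> by (simp add: q_def field_simps power2_eq_square)
  have ln_eq: "ln (1 - 4 * (r / 8)) = - (ln 2 + 2 * ln q)"
    unfolding eq using \<open>q > 0\<close> by (simp add: ln_div ln_mult ln_realpow)
  have sqrt_eq: "sqrt (1 - 4 * (r / 8)) = 1 / (sqrt 2 * q)"
    unfolding eq using \<open>q > 0\<close> by (simp add: real_sqrt_divide real_sqrt_mult)
  show ?thesis
    unfolding odd_harm_gf_def ln_eq sqrt_eq q_def [symmetric] using \<open>q > 0\<close> by (simp add: field_simps)
qed

lemma golden_binet_odd_harm_sums:
  "(\<lambda>n. real (2 * n choose n) * odd_harm n / 8 ^ n * golden_binet A B (int n + t))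
     sums (sqrt 2 * ln gr_alpha * golden_binet A B (t + 1) + ln 2 / sqrt 2 * golden_binet A (- B) (t + 1))"
proof -
  define P where "P = A * gr_alpha powi t"
  define Q where "Q = B * gr_beta powi t"
  have "gr_alpha \<noteq> 0" "gr_beta \<noteq> 0"
    using gr_alpha_times_beta by auto
  then have term_eq: "real (2 * n choose n) * odd_harm n / 8 ^ n * golden_binet A B (int n + t)
      = P * (real (2 * n choose n) * odd_harm n * (gr_alpha / 8) ^ n)
        + Q * (real (2 * n choose n) * odd_harm n * (gr_beta / 8) ^ n)" for n
    by (simp add: golden_binet_def P_def Q_def power_int_add field_simps)
  have "\<bar>gr_alpha / 8\<bar> < 1 / 4" "\<bar>gr_beta / 8\<bar> < 1 / 4"
    using gr_alpha_gt_1 gr_alpha_less_2 abs_gr_beta_less_1 by simp_all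
  then have sums: "(\<lambda>n. real (2 * n choose n) * odd_harm n / 8 ^ n * golden_binet A B (int n + t))
      sums (P * odd_harm_gf (gr_alpha / 8) + Q * odd_harm_gf (gr_beta / 8))"
    unfolding term_eq by (intro sums_add sums_mult odd_harm_gf_sums)
  have gf_alpha: "odd_harm_gf (gr_alpha / 8) = sqrt 2 * gr_alpha * (ln gr_alpha + ln 2 / 2)"
    using odd_harm_gf_golden_root [OF gr_alpha_sq] gr_alpha_gt_1 by simp
  have gf_beta: "odd_harm_gf (gr_beta / 8) = sqrt 2 * gr_beta * (ln gr_alpha - ln 2 / 2)"
  proof -
    have "\<bar>gr_beta\<bar> = inverse gr_alpha"
      using gr_alpha_gt_1 by (simp add: gr_beta_eq)
    then show ?thesis
      using odd_harm_gf_golden_root [OF gr_beta_sq] gr_alpha_gt_1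
      by (simp add: ln_inverse gr_beta_eq algebra_simps)
  qed
  have binet_Suc: "golden_binet A B (t + 1) = P * gr_alpha + Q * gr_beta"
    and binet_Suc_conj: "golden_binet A (- B) (t + 1) = P * gr_alpha - Q * gr_beta"
    using \<open>gr_alpha \<noteq> 0\<close> \<open>gr_beta \<noteq> 0\<close>
    by (simp_all add: golden_binet_def P_def Q_def power_int_add)
  have sqrt2_sq: "sqrt 2 * (sqrt 2 * x) = 2 * x" for x :: real
    by (simp flip: mult.assoc)
  have "P * odd_harm_gf (gr_alpha / 8) + Q * odd_harm_gf (gr_beta / 8)
      = sqrt 2 * ln gr_alpha * golden_binet A B (t + 1) + ln 2 / sqrt 2 * golden_binet A (- B) (t + 1)"
    unfolding gf_alpha gf_beta binet_Suc binet_Suc_conj by (simp add: field_simps sqrt2_sq)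
  with sums show ?thesis by simp
qed

lemma gib_odd_harm_sums:
  "(\<lambda>m. let n = Suc m in real (2 * n choose n) * odd_harm n / 8 ^ n * gib a b (int n + t))
     sums (sqrt 2 * gib a b (t + 1) * ln gr_alpha + ln 2 / sqrt 10 * (gib a b (t + 2) + gib a b t))"
proof -
  define A where "A = (b - a * gr_beta) / sqrt 5"
  define B where "B = (a * gr_alpha - b) / sqrt 5"
  have gib: "gib a b = golden_binet A B"
    unfolding A_def B_def by (rule gib_eq_golden_binet)
  have "sqrt 10 = sqrt 2 * sqrt 5"
    by (simp flip: real_sqrt_mult)
  then have ln2_term: "ln 2 / sqrt 10 * (gib a b (t + 2) + gib a b t)
      = ln 2 / sqrt 2 * golden_binet A (- B) (t + 1)"
    unfolding gib golden_binet_add_two by simp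
  define F where "F n = real (2 * n choose n) * odd_harm n / 8 ^ n * gib a b (int n + t)" for n
  have "F sums (sqrt 2 * ln gr_alpha * gib a b (t + 1) + ln 2 / sqrt 2 * golden_binet A (- B) (t + 1))"
    unfolding F_def gib by (rule golden_binet_odd_harm_sums)
  moreover have "F 0 = 0"
    by (simp add: F_def odd_harm_def)
  ultimately have "(\<lambda>m. F (Suc m))
      sums (sqrt 2 * ln gr_alpha * gib a b (t + 1) + ln 2 / sqrt 2 * golden_binet A (- B) (t + 1))"
    by (simp add: sums_Suc_iff)
  then show ?thesis
    using ln2_term by (simp add: F_def Let_def mult_ac)
qed

theorem theorem12:
  shows "(\<forall>t::int.
      (\<lambda>m. let n = Suc m in real (2*n choose n) * odd_harm n / 8^n * Lucz (int n + t))
        sums (sqrt 2 * Lucz (t+1) * ln gr_alpha + sqrt 10 * ln 2 / 2 * Fibz (t+1))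
    \<and> (\<lambda>m. let n = Suc m in real (2*n choose n) * odd_harm n / 8^n * Fibz (int n + t))
        sums (sqrt 2 * Fibz (t+1) * ln gr_alpha + ln 2 / sqrt 10 * Lucz (t+1)))
   \<and> (\<forall>(a::real) (b::real) (t::int). \<not> (a = 0 \<and> b = 0) \<longrightarrow>
      (\<lambda>m. let n = Suc m in real (2*n choose n) * odd_harm n / 8^n * gib a b (int n + t))
        sums (sqrt 2 * gib a b (t+1) * ln gr_alpha + ln 2 / sqrt 10 * (gib a b (t+2) + gib a b t)))"
proof (intro conjI allI impI)
  fix t :: int
  have Lucz_term: "ln 2 / sqrt 10 * (Lucz (t + 2) + Lucz t) = sqrt 10 * ln 2 / 2 * Fibz (t + 1)"
    unfolding Lucz_add_two using real_sqrt_mult_self [of 10] by (simp add: field_simps)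
  show "(\<lambda>m. let n = Suc m in real (2*n choose n) * odd_harm n / 8^n * Lucz (int n + t))
      sums (sqrt 2 * Lucz (t+1) * ln gr_alpha + sqrt 10 * ln 2 / 2 * Fibz (t+1))"
    using gib_odd_harm_sums [of 2 1 t, folded Lucz_def, unfolded Lucz_term] .
  show "(\<lambda>m. let n = Suc m in real (2*n choose n) * odd_harm n / 8^n * Fibz (int n + t))
      sums (sqrt 2 * Fibz (t+1) * ln gr_alpha + ln 2 / sqrt 10 * Lucz (t+1))"
    using gib_odd_harm_sums [of 0 1 t, folded Fibz_def] by (simp only: Fibz_add_two)
qed (rule gib_odd_harm_sums)

end
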